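(* Assume Assumption (S) of the context. Let $u_h(\cdot,t)\in\mathbb V^k$ and let numerical flux values $\hat f_{i,j}$ ($j=0,\dots,k+1$, for every cell $i$) be given, with $\hat f_{i,0}=\hat f_{i-\frac12}$ and $\hat f_{i,k+1}=\hat f_{i+\frac12}$ the interface fluxes. Then the semi-discrete spectral volume relations $$((u_h)_t,\omega^* )=\sum_i\sum_{j=0}^k\omega^*_{i,j}(\hat f_{i,j}-\hat f_{i,j+1})\quad\forall\omega^*\in\mathbb V^{k,*}$$ hold if and only if $$((u_h)_t,\omega)_*=\sum_i\Big(Q_i^k(\hat f\omega_x)+\omega(x_{i-\frac12}^+)\hat f_{i-\frac12}-\omega(x_{i+\frac12}^-)\hat f_{i+\frac12}\Big)\quad\forall\omega\in\mathbb V^k,$$ where $Q_i^k(\hat f\omega_x):=\sum_{j=0}^{k+1}A_{i,j}\hat f_{i,j}\,(\omega|_{I_i})'(x_{i,j})$.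
   Context: Let $\Omega=[a,b]$ be partitioned into finitely many cells $I_i=[x_{i-\frac12},x_{i+\frac12}]$ with sizes $h_i$. $(\cdot,\cdot)$ is the $L^2(\Omega)$ inner product, $(\cdot,\cdot)_{I_i}$ the $L^2(I_i)$ inner product. $\mathbb V^k=\{v\in L^2(\Omega): v|_{I_i}\in\mathbb P^k(I_i)\ \forall i\}$. Each $I_i$ has subdivision points $x_{i-\frac12}=x_{i,0}<x_{i,1}<\dots<x_{i,k}<x_{i,k+1}=x_{i+\frac12}$, control volumes $I_{i,j}=[x_{i,j},x_{i,j+1}]$, $j=0,\dots,k$; $\mathbb V^{k,*}$ is the space of functions constant on each $I_{i,j}$, and $\omega^*_{i,j}$ is the value of $\omega^*$ on $I_{i,j}$. On each $I_i$ a quadrature $Q_i^k(v)=\sum_{j=0}^{k+1}A_{i,j}v(x_{i,j})$ is given with error $R_i^k(v)=\int_{I_i}v\,dx-Q_i^k(v)$, exact on $\mathbb P^{k-1}(I_i)$. $M^*:\mathbb V^k\to\mathbb V^{k,*}$ is defined cellwise: for $v=\omega|_{I_i}$, $(M^*\omega)|_{I_{i,0}}=v(x_{i-\frac12})+A_{i,0}v'(x_{i-\frac12})$ and $(M^*\omega)|_{I_{i,j}}-(M^*\omega)|_{I_{i,j-1}}=A_{i,j}v'(x_{i,j})$, $j=1,\dots,k$ (one-sided values from inside $I_i$). $\omega(x^\pm)$ denote right/left limits. $L_{i,\ell}$ is the shifted Legendre polynomial of degree $\ell$ on $I_i$ with $L_{i,\ell}(x_{i+\frac12})=1$, $(L_{i,\ell},L_{i,m})_{I_i}=\delta_{\ell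 m}h_i/(2\ell+1)$. Assumption (S): $k\ge1$ and for every $i$, (1) $R_i^k(v)=0$ for all $v\in\mathbb P^{2k-1}(I_i)$, and (2) $\frac{h_i}{2k-1}-Q_i^k(L_{i,k+1}L_{i,k-1})>0$. Under (S), $(v,\omega)_*:=(v,M^*\omega)$ is an inner product on $\mathbb V^k$. *)

theory Defs
  imports "HOL-Analysis.Analysis" "HOL-Computational_Algebra.Polynomial"
begin

(* Mesh conventions: cells i = 0..N-1; cell i is [xI i, xI (Suc i)], i.e.
   x_{i-1/2} = xI i and x_{i+1/2} = xI (Suc i).  Subdivision points of cell i
   are x i j, j = 0..k+1.  A function in V^k is given cellwise by
   polynomials w :: nat => real poly (w i = restriction to I_i), a function in
   V^{k,*} by its values ws i j on I_{i,j}, j = 0..k. *)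

definition mesh :: "real \<Rightarrow> real \<Rightarrow> nat \<Rightarrow> nat \<Rightarrow> (nat \<Rightarrow> real) \<Rightarrow> (nat \<Rightarrow> nat \<Rightarrow> real) \<Rightarrow> bool" where
  "mesh a b N k xI x \<longleftrightarrow> 0 < N \<and> xI 0 = a \<and> xI N = b \<and>
     (\<forall>i<N. x i 0 = xI i \<and> x i (Suc k) = xI (Suc i) \<and> (\<forall>j\<le>k. x i j < x i (Suc j)))"

definition in_Vk :: "nat \<Rightarrow> nat \<Rightarrow> (nat \<Rightarrow> real poly) \<Rightarrow> bool" where
  "in_Vk N k w \<longleftrightarrow> (\<forall>i<N. degree (w i) \<le> k)"

definition quad :: "nat \<Rightarrow> (nat \<Rightarrow> nat \<Rightarrow> real) \<Rightarrow> (nat \<Rightarrow> nat \<Rightarrow> real) \<Rightarrow> nat \<Rightarrow> (real \<Rightarrow> real) \<Rightarrow> real" where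
  "quad k A x i v = (\<Sum>j\<le>Suc k. A i j * v (x i j))"

(* shifted Legendre polynomial of degree n on [c,d], normalised by L(d) = 1:
   L(x) = sum_{m=0}^n C(n,m) C(n+m,m) ((x-d)/(d-c))^m *)
definition shifted_legendre :: "real \<Rightarrow> real \<Rightarrow> nat \<Rightarrow> real \<Rightarrow> real" where
  "shifted_legendre c d n y =
     (\<Sum>m\<le>n. real (n choose m) * real ((n + m) choose m) * ((y - d) / (d - c)) ^ m)"

definition assumption_S :: "nat \<Rightarrow> nat \<Rightarrow> (nat \<Rightarrow> real) \<Rightarrow> (nat \<Rightarrow> nat \<Rightarrow> real) \<Rightarrow> (nat \<Rightarrow> nat \<Rightarrow> real) \<Rightarrow> bool" where
  "assumption_S N k xI x A \<longleftrightarrow> 1 \<le> k \<and>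
     (\<forall>i<N.
        (\<forall>p::real poly. degree p \<le> 2 * k - 1 \<longrightarrow>
            integral {xI i .. xI (Suc i)} (poly p) - quad k A x i (poly p) = 0) \<and>
        (xI (Suc i) - xI i) / (2 * real k - 1)
          - quad k A x i (\<lambda>y. shifted_legendre (xI i) (xI (Suc i)) (Suc k) y
                              * shifted_legendre (xI i) (xI (Suc i)) (k - 1) y) > 0)"

definition Mstar :: "(nat \<Rightarrow> nat \<Rightarrow> real) \<Rightarrow> (nat \<Rightarrow> nat \<Rightarrow> real) \<Rightarrow> (nat \<Rightarrow> real poly) \<Rightarrow> nat \<Rightarrow> nat \<Rightarrow> real" where
  "Mstar A x w i j = poly (w i) (x i 0) + (\<Sum>l\<le>j. A i l * poly (pderiv (w i)) (x i l))"

definition ip_star_fun :: "nat \<Rightarrow> nat \<Rightarrow> (nat \<Rightarrow> nat \<Rightarrow> real) \<Rightarrow> (nat \<Rightarrow> real poly) \<Rightarrow> (nat \<Rightarrow> nat \<Rightarrow> real) \<Rightarrow> real" where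
  "ip_star_fun N k x v ws = (\<Sum>i<N. \<Sum>j\<le>k. ws i j * integral {x i j .. x i (Suc j)} (poly (v i)))"

definition ip_star :: "nat \<Rightarrow> nat \<Rightarrow> (nat \<Rightarrow> nat \<Rightarrow> real) \<Rightarrow> (nat \<Rightarrow> nat \<Rightarrow> real) \<Rightarrow> (nat \<Rightarrow> real poly) \<Rightarrow> (nat \<Rightarrow> real poly) \<Rightarrow> real" where
  "ip_star N k A x v w = ip_star_fun N k x v (Mstar A x w)"

end

theory Submission
  imports Defs
begin

(* Both relations say that the subcell integrals of (u_h)_t equal the flux differences
   fhat_{i,j} - fhat_{i,j+1}: the first tests this against all of V^{k,*}, the second against
   M^*(V^k).  Indeed, summation by parts turns the jumps A_{i,j} w'(x_{i,j}) of M^* w into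
     sum_j (M^* w)_j (f_j - f_{j+1}) = Q(f w') + w(x_{i-1/2}) f_0 - w(x_{i+1/2}) f_{k+1},
   which needs only that Q integrates w' exactly.  So the theorem amounts to M^* being onto
   V^{k,*} on each cell, i.e. to no nonzero vector e of subcell values annihilating M^*(P^k).

   Given such e, let V of degree k+1 interpolate the partial sums of e at the subdivision
   points, so that e_j is the integral of V' over I_{i,j}.  Then
   0 = sum_j (M^* V')_j e_j = int V'^2 + R(V'' V), and since V'' V has degree 2k, R(V'' V) is a
   multiple of its top coefficient.  Bessel's inequality for the shifted Legendre polynomial L_k
   bounds int V'^2 below by the same top coefficient, and condition (2) of Assumption (S),
   rewritten with the orthogonality and the leading coefficients of L_{k-1}, L_k, L_{k+1},
   makes the sum strictly positive unless V' = 0. *)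

section \<open>Factorials and central binomial coefficients\<close>

lemma fact_mult_pochhammer_Suc:
  "fact i * pochhammer (of_nat (Suc i)) n = (fact (i + n) :: 'a :: {semiring_char_0, comm_semiring_1})"
  unfolding pochhammer_fact pochhammer_product' by (simp add: add.commute)

lemma fact_mult_central_binomial: "fact n * fact n * real ((2 * n) choose n) = fact (2 * n)"
proof -
  have "fact n * fact n * ((2 * n) choose n) = (fact (2 * n) :: nat)"
    using binomial_fact_lemma[of n "2 * n"] by (simp add: mult_2)
  then have "real (fact n * fact n * ((2 * n) choose n)) = real (fact (2 * n))" by (rule arg_cong)
  then show ?thesis by (simp only: of_nat_mult of_nat_fact)
qed

lemma central_binomial_Suc:
  "real ((2 * Suc n) choose Suc n) * (real n + 1) = 2 * (2 * real n + 1) * real ((2 * n) choose n)"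
proof -
  define B where "B m = real ((2 * m) choose m)" for m
  have fact_B: "fact m * fact m * B m = fact (2 * m)" for m
    unfolding B_def by (rule fact_mult_central_binomial)
  have "(fact n * fact n * (real n + 1)) * (B (Suc n) * (real n + 1)) = fact (Suc n) * fact (Suc n) * B (Suc n)"
    by (simp add: algebra_simps)
  also have "\<dots> = fact (Suc (Suc (2 * n)))"
    using fact_B[of "Suc n"] by simp
  also have "\<dots> = (fact n * fact n * B n) * (2 * (real n + 1)) * (2 * real n + 1)"
    unfolding fact_B by (simp add: algebra_simps)
  finally have "(fact n * fact n * (real n + 1)) * (B (Suc n) * (real n + 1)) =
      (fact n * fact n * (real n + 1)) * (2 * (2 * real n + 1) * B n)"
    by (simp add: algebra_simps)
  moreover have "fact n * fact n * (real n + 1) \<noteq> 0" by simp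
  ultimately show ?thesis unfolding B_def by (metis mult_left_cancel)
qed

section \<open>Derivatives and coefficients of polynomials\<close>

lemma pderiv_linear [simp]: "pderiv [:a, 1:] = 1"
  by (simp add: pderiv_pCons)

lemma higher_pderiv_pderiv: "(pderiv ^^ n) (pderiv p) = (pderiv ^^ Suc n) p"
  by (simp add: funpow_Suc_right del: funpow.simps)

lemma smult_sum_right: "smult a (sum f S) = (\<Sum>i\<in>S. smult a (f i))"
  by (induction S rule: infinite_finite_induct) (auto simp: smult_add_right)

lemma higher_pderiv_eq_0: "degree p < n \<Longrightarrow> (pderiv ^^ n) (p :: 'a :: idom poly) = 0"
  by (rule poly_eqI) (simp add: coeff_higher_pderiv coeff_eq_0)

lemma higher_pderiv_linear_power:
  fixes a :: "'a :: idom"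
  shows "(pderiv ^^ m) ([:a,1:] ^ (i + m)) = smult (pochhammer (of_nat (Suc i)) m) ([:a,1:] ^ i)"
proof (induction m arbitrary: i)
  case (Suc m)
  have "(pderiv ^^ Suc m) ([:a,1:] ^ (i + Suc m)) = (pderiv ^^ m) (pderiv ([:a,1:] ^ Suc (i + m)))"
    by (simp add: higher_pderiv_pderiv)
  also have "\<dots> = smult (of_nat (Suc (i + m)) * pochhammer (of_nat (Suc i)) m) ([:a,1:] ^ i)"
    by (simp del: power_Suc add: pderiv_power_Suc higher_pderiv_smult Suc.IH)
  finally show ?case by (simp add: pochhammer_rec' algebra_simps)
qed simp

lemma linear_power_dvd_pderiv:
  fixes p :: "'a :: idom poly"
  assumes "[:-a,1:] ^ Suc m dvd p"
  shows "[:-a,1:] ^ m dvd pderiv p"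
proof -
  obtain q where q: "p = [:-a,1:] ^ Suc m * q" using assms by (elim dvdE)
  have "pderiv p = [:-a,1:] ^ m * ([:-a,1:] * pderiv q + smult (of_nat (Suc m)) q)"
    unfolding q pderiv_mult pderiv_power_Suc by (simp add: algebra_simps pderiv_pCons)
  then show ?thesis by simp
qed

lemma linear_power_dvd_higher_pderiv:
  fixes p :: "'a :: idom poly"
  shows "j \<le> m \<Longrightarrow> [:-a,1:] ^ m dvd p \<Longrightarrow> [:-a,1:] ^ (m - j) dvd (pderiv ^^ j) p"
proof (induction j)
  case (Suc j)
  then have "[:-a,1:] ^ Suc (m - Suc j) dvd (pderiv ^^ j) p"
    by (simp add: Suc_diff_Suc)
  then show ?case by (simp add: linear_power_dvd_pderiv)
qed simp

lemma degree_sub_lead_term_less: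
  fixes p :: "'a :: comm_ring_1 poly"
  assumes "degree p \<le> n" "0 < n"
  shows "degree (p - smult (coeff p n) ([:a,1:] ^ n)) < n"
proof -
  define q where "q = p - smult (coeff p n) ([:a,1:] ^ n)"
  have "degree q \<le> n" unfolding q_def
    using assms by (intro degree_diff_le) (auto intro: order.trans[OF degree_smult_le] simp: degree_linear_power)
  moreover have "coeff q n = 0" unfolding q_def by (simp add: coeff_linear_power)
  ultimately have "q = 0 \<or> degree q < n" by (metis le_neq_implies_less leading_coeff_0_iff)
  with assms show ?thesis unfolding q_def by auto
qed

lemma coeff_mult_degree_bounds:
  fixes p q :: "'a :: comm_semiring_0 poly"
  assumes "degree p \<le> m" "degree q \<le> n"
  shows "coeff (p * q) (m + n) = coeff p m * coeff q n"
proof (cases "degree p = m \<and> degree q = n")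
  case True then show ?thesis using coeff_mult_degree_sum[of p q] by simp
next
  case False
  then have "coeff p m = 0 \<or> coeff q n = 0" using assms by (auto intro: coeff_eq_0)
  moreover have "degree (p * q) < m + n"
    using False assms degree_mult_le[of p q] by linarith
  ultimately show ?thesis by (auto simp: coeff_eq_0)
qed

lemma lagrange_interpolation_exists:
  fixes xs ys :: "nat \<Rightarrow> 'a :: field"
  assumes inj: "\<And>i j. i \<le> n \<Longrightarrow> j \<le> n \<Longrightarrow> xs i = xs j \<Longrightarrow> i = j"
  shows "\<exists>V. degree V \<le> n \<and> (\<forall>m\<le>n. poly V (xs m) = ys m)"
proof -
  define B where "B j = (\<Prod>l\<in>{..n}-{j}. [:- xs l, 1:])" for j
  define V where "V = (\<Sum>j\<le>n. smult (ys j / (\<Prod>l\<in>{..n}-{j}. (xs j - xs l))) (B j))"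
  have "degree (B j) \<le> n" if "j \<le> n" for j
  proof -
    have "degree (B j) \<le> (\<Sum>l\<in>{..n}-{j}. degree [:- xs l, 1::'a:])"
      unfolding B_def using degree_prod_sum_le[of "{..n}-{j}" "\<lambda>l. [:- xs l, 1::'a:]"] by (simp add: o_def)
    then show ?thesis using that by simp
  qed
  then have "degree V \<le> n" unfolding V_def
    by (intro degree_sum_le) (auto intro: order.trans[OF degree_smult_le])
  moreover have "poly V (xs m) = ys m" if "m \<le> n" for m
  proof -
    have "poly V (xs m) = (\<Sum>j\<le>n. if j = m then ys m else 0)"
      unfolding V_def poly_sum
    proof (intro sum.cong refl)
      fix j assume "j \<in> {..n}"
      have "poly (B j) (xs m) = (\<Prod>l\<in>{..n}-{j}. (xs m - xs l))"
        unfolding B_def poly_prod by simp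
      moreover have "(\<Prod>l\<in>{..n}-{j}. (xs j - xs l)) \<noteq> 0"
        using inj \<open>j \<in> {..n}\<close> by (auto simp: prod_zero_iff)
      moreover have "(\<Prod>l\<in>{..n}-{j}. (xs m - xs l)) = 0" if "j \<noteq> m"
        using that \<open>m \<le> n\<close> by (intro prod_zero) auto
      ultimately show "poly (smult (ys j / (\<Prod>l\<in>{..n}-{j}. (xs j - xs l))) (B j)) (xs m) =
          (if j = m then ys m else 0)"
        by auto
    qed
    then show ?thesis using that by simp
  qed
  ultimately show ?thesis by blast
qed

section \<open>Integrals of polynomials\<close>

definition poly_integral :: "real \<Rightarrow> real \<Rightarrow> real poly \<Rightarrow> real" where
  "poly_integral c d p = integral {c..d} (poly p)"

lemma poly_integrable_on: "poly p integrable_on {c..d::real}"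
  by (intro integrable_continuous_real continuous_intros)

lemma poly_integral_0 [simp]: "poly_integral c d 0 = 0"
  by (simp add: poly_integral_def poly_0[abs_def])

lemma poly_integral_add: "poly_integral c d (p + q) = poly_integral c d p + poly_integral c d q"
  unfolding poly_integral_def poly_add by (rule integral_add) (auto intro: poly_integrable_on)

lemma poly_integral_diff: "poly_integral c d (p - q) = poly_integral c d p - poly_integral c d q"
  unfolding poly_integral_def poly_diff by (rule integral_diff) (auto intro: poly_integrable_on)

lemma poly_integral_smult: "poly_integral c d (smult a p) = a * poly_integral c d p"
  unfolding poly_integral_def poly_smult by (rule integral_mult_right)

lemma poly_integral_pderiv:
  assumes "c \<le> d"
  shows "poly_integral c d (pderiv p) = poly p d - poly p c"
  unfolding poly_integral_def
proof (rule integral_unique, rule fundamental_theorem_of_calculus[OF assms])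
  fix y show "((\<lambda>y. poly p y) has_vector_derivative poly (pderiv p) y) (at y within {c..d})"
    by (simp flip: has_real_derivative_iff_has_vector_derivative add: has_field_derivative_at_within)
qed

lemma poly_integral_by_parts:
  assumes "c \<le> d"
  shows "poly_integral c d (pderiv p * q) = poly (p * q) d - poly (p * q) c - poly_integral c d (p * pderiv q)"
  using poly_integral_pderiv[OF assms, of "p * q"]
  by (simp add: pderiv_mult poly_integral_add mult.commute)

lemma poly_integral_square_nonneg: "c \<le> d \<Longrightarrow> 0 \<le> poly_integral c d (p * p)"
  unfolding poly_integral_def by (rule integral_nonneg) (auto intro: poly_integrable_on)

lemma poly_integral_square_eq_0:
  assumes "c < d" and "poly_integral c d (p * p) = 0"
  shows "p = 0"
proof (rule ccontr)
  assume "p \<noteq> 0"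
  have "continuous_on {c..d} (\<lambda>y. poly (p * p) y)" by (intro continuous_intros)
  then have "\<forall>y\<in>{c..d}. poly (p * p) y = 0"
    using assms integral_eq_0_iff[of c d "\<lambda>y. poly (p * p) y"] by (simp add: poly_integral_def)
  then have "{c..d} \<subseteq> {y. poly p y = 0}" by auto
  moreover have "finite {y. poly p y = 0}" using \<open>p \<noteq> 0\<close> by (rule poly_roots_finite)
  ultimately have "finite {c..d}" by (rule finite_subset)
  with \<open>c < d\<close> show False using infinite_Icc by blast
qed

lemma poly_integral_by_parts_iterated:
  assumes "c \<le> d"
  shows "(\<And>j. j < n \<Longrightarrow> poly ((pderiv ^^ j) f) c = 0 \<and> poly ((pderiv ^^ j) f) d = 0) \<Longrightarrow>
    poly_integral c d ((pderiv ^^ n) f * q) = (-1) ^ n * poly_integral c d (f * (pderiv ^^ n) q)"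
proof (induction n arbitrary: f)
  case (Suc n)
  have "poly ((pderiv ^^ j) (pderiv f)) c = 0 \<and> poly ((pderiv ^^ j) (pderiv f)) d = 0" if "j < n" for j
    using Suc.prems[of "Suc j"] that by (simp only: higher_pderiv_pderiv)
  then have "poly_integral c d ((pderiv ^^ n) (pderiv f) * q) = (-1) ^ n * poly_integral c d (pderiv f * (pderiv ^^ n) q)"
    by (rule Suc.IH)
  then have "poly_integral c d ((pderiv ^^ Suc n) f * q) = (-1) ^ n * poly_integral c d (pderiv f * (pderiv ^^ n) q)"
    by (simp only: higher_pderiv_pderiv)
  also have "poly_integral c d (pderiv f * (pderiv ^^ n) q) = - poly_integral c d (f * (pderiv ^^ Suc n) q)"
    using poly_integral_by_parts[OF assms, of f] Suc.prems[of 0] by simp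
  finally show ?case by simp
qed simp

lemma poly_integral_beta:
  assumes "c \<le> d"
  shows "poly_integral c d ([:-c,1:] ^ a * [:-d,1:] ^ b) =
    (-1) ^ b * fact a * fact b * (d - c) ^ (a + b + 1) / fact (a + b + 1)"
proof (induction b arbitrary: a)
  case 0
  have "poly_integral c d ([:-c,1:] ^ a) = poly_integral c d (pderiv (smult (1 / of_nat (Suc a)) ([:-c,1:] ^ Suc a)))"
    by (simp del: power_Suc add: pderiv_smult pderiv_power_Suc)
  also have "\<dots> = (d - c) ^ Suc a / of_nat (Suc a)"
    unfolding poly_integral_pderiv[OF assms] by (simp del: power_Suc)
  finally show ?case by (simp add: divide_simps)
next
  case (Suc b)
  define F where "F = smult (1 / of_nat (Suc a)) ([:-c,1::real:] ^ Suc a)"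
  have F: "pderiv F = [:-c,1:] ^ a"
    unfolding F_def by (simp del: power_Suc add: pderiv_smult pderiv_power_Suc)
  have "poly_integral c d ([:-c,1:] ^ a * [:-d,1:] ^ Suc b) = poly_integral c d (pderiv F * [:-d,1:] ^ Suc b)"
    by (simp only: F)
  also have "\<dots> = - poly_integral c d (F * pderiv ([:-d,1:] ^ Suc b))"
    using poly_integral_by_parts[OF assms, of F] by (simp add: F_def)
  also have "\<dots> = - (of_nat (Suc b) / of_nat (Suc a)) * poly_integral c d ([:-c,1:] ^ Suc a * [:-d,1:] ^ b)"
    unfolding F_def by (simp del: power_Suc add: pderiv_power_Suc poly_integral_smult algebra_simps)
  also have "\<dots> = (-1) ^ Suc b * fact a * fact (Suc b) * (d - c) ^ (a + Suc b + 1) / fact (a + Suc b + 1)"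
  proof -
    have reorder: "- (x / y) * (s * (y * fa) * fb * P / F) = (- s) * fa * (x * fb) * P / F"
      if "y \<noteq> 0" for x y s fa fb P F :: real
      using that by (simp add: field_simps)
    have "Suc a + b + 1 = a + Suc b + 1" by simp
    then show ?thesis
      unfolding Suc.IH fact_Suc[of a] fact_Suc[of b] of_nat_mult power_Suc[of "-1::real" b]
      by (subst reorder) simp_all
  qed
  finally show ?case .
qed

section \<open>Shifted Legendre polynomials\<close>

definition rodrigues_poly :: "real \<Rightarrow> real \<Rightarrow> nat \<Rightarrow> real poly" where
  "rodrigues_poly c d n = [:-c,1:] ^ n * [:-d,1:] ^ n"

definition legendre_poly :: "real \<Rightarrow> real \<Rightarrow> nat \<Rightarrow> real poly" where
  "legendre_poly c d n =
     (\<Sum>m\<le>n. smult (real (n choose m) * real ((n + m) choose m) / (d - c) ^ m) ([:-d,1:] ^ m))"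

lemma poly_legendre_poly: "poly (legendre_poly c d n) y = shifted_legendre c d n y"
  unfolding shifted_legendre_def legendre_poly_def poly_sum poly_smult poly_power
  by (intro sum.cong refl) (simp add: power_divide)

lemma degree_legendre_poly: "degree (legendre_poly c d n) \<le> n"
  unfolding legendre_poly_def
  by (rule degree_sum_le) (auto intro: order.trans[OF degree_smult_le] simp: degree_linear_power)

lemma lead_coeff_legendre_poly: "coeff (legendre_poly c d n) n = real ((2 * n) choose n) / (d - c) ^ n"
proof -
  have "coeff (legendre_poly c d n) n = (\<Sum>m\<le>n. if m = n then real ((2 * n) choose n) / (d - c) ^ n else 0)"
    unfolding legendre_poly_def coeff_sum
    by (intro sum.cong refl) (auto simp: coeff_eq_0 degree_linear_power coeff_linear_power mult_2)
  then show ?thesis by simp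
qed

lemma higher_pderiv_rodrigues_poly_vanishes:
  assumes "j < n"
  shows "poly ((pderiv ^^ j) (rodrigues_poly c d n)) c = 0 \<and> poly ((pderiv ^^ j) (rodrigues_poly c d n)) d = 0"
proof -
  have "poly ((pderiv ^^ j) (rodrigues_poly c d n)) a = 0" if "a = c \<or> a = d" for a
  proof -
    have "[:-a,1:] ^ (n - j) dvd (pderiv ^^ j) (rodrigues_poly c d n)"
      using that assms by (intro linear_power_dvd_higher_pderiv) (auto simp: rodrigues_poly_def)
    moreover have "[:-a,1:] dvd [:-a,1:] ^ (n - j)" using assms by (simp add: dvd_power)
    ultimately show ?thesis by (meson dvd_trans poly_eq_0_iff_dvd)
  qed
  then show ?thesis by blast
qed

lemma poly_integral_rodrigues_poly:
  assumes "c \<le> d"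
  shows "poly_integral c d ((pderiv ^^ n) (rodrigues_poly c d n) * q) =
    (-1) ^ n * poly_integral c d (rodrigues_poly c d n * (pderiv ^^ n) q)"
  using assms higher_pderiv_rodrigues_poly_vanishes by (rule poly_integral_by_parts_iterated)

text \<open>Expand \<open>(X - c)^n = ((X - d) + (d - c))^n\<close> and differentiate termwise.\<close>

lemma legendre_poly_rodrigues:
  assumes "c \<noteq> d"
  shows "(pderiv ^^ n) (rodrigues_poly c d n) = smult (fact n * (d - c) ^ n) (legendre_poly c d n)"
proof -
  define X where "X = [:-d, 1::real:]"
  define h where "h = d - c"
  have "h \<noteq> 0" using assms by (simp add: h_def)
  have shift: "[:-c,1:] = X + [:h:]" by (simp add: X_def h_def)
  have "rodrigues_poly c d n = (\<Sum>i\<le>n. smult (real (n choose i) * h ^ (n - i)) (X ^ (i + n)))"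
    unfolding rodrigues_poly_def X_def[symmetric] shift binomial_ring sum_distrib_right
  proof (intro sum.cong refl)
    fix i
    have "of_nat (n choose i) * X ^ i * [:h:] ^ (n - i) * X ^ n =
      smult (h ^ (n - i) * real (n choose i)) (X ^ i * X ^ n)"
      by (simp add: of_nat_poly poly_const_pow)
    then show "of_nat (n choose i) * X ^ i * [:h:] ^ (n - i) * X ^ n =
      smult (real (n choose i) * h ^ (n - i)) (X ^ (i + n))"
      by (simp add: power_add mult.commute)
  qed
  then have "(pderiv ^^ n) (rodrigues_poly c d n) =
      (\<Sum>i\<le>n. smult (real (n choose i) * h ^ (n - i) * pochhammer (real (Suc i)) n) (X ^ i))"
    by (simp add: higher_pderiv_sum higher_pderiv_smult X_def higher_pderiv_linear_power)
  also have "\<dots> = smult (fact n * h ^ n) (legendre_poly c d n)"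
    unfolding legendre_poly_def smult_sum_right h_def[symmetric] X_def[symmetric]
  proof (intro sum.cong refl)
    fix i assume "i \<in> {..n}"
    have "fact i * (fact n * real ((n + i) choose i)) = fact (i + n)"
      by (subst binomial_fact) (auto simp: add.commute)
    also have "\<dots> = fact i * pochhammer (real (Suc i)) n"
      by (rule fact_mult_pochhammer_Suc[symmetric])
    finally have "pochhammer (real (Suc i)) n = fact n * real ((n + i) choose i)" by simp
    moreover have "h ^ n = h ^ (n - i) * h ^ i" using \<open>i \<in> {..n}\<close> by (simp flip: power_add)
    ultimately show "smult (real (n choose i) * h ^ (n - i) * pochhammer (real (Suc i)) n) (X ^ i) =
      smult (fact n * h ^ n) (smult (real (n choose i) * real ((n + i) choose i) / h ^ i) (X ^ i))"
      using \<open>h \<noteq> 0\<close> by (simp add: field_simps)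
  qed
  finally show ?thesis by (simp add: h_def)
qed

lemma legendre_poly_orthogonal:
  assumes "c < d" "degree q < n"
  shows "poly_integral c d (legendre_poly c d n * q) = 0"
proof -
  have "legendre_poly c d n = smult (1 / (fact n * (d - c) ^ n)) ((pderiv ^^ n) (rodrigues_poly c d n))"
    using assms(1) by (simp add: legendre_poly_rodrigues)
  then show ?thesis
    using assms poly_integral_rodrigues_poly[of c d n q] higher_pderiv_eq_0[of q n]
    by (simp add: poly_integral_smult)
qed

lemma poly_integral_legendre_poly_linear_power:
  assumes "c < d"
  shows "poly_integral c d (legendre_poly c d n * [:-d,1:] ^ n) = fact n * fact n * (d - c) ^ (n + 1) / fact (2 * n + 1)"
proof -
  have "(pderiv ^^ n) ([:-d,1:] ^ n) = smult (fact n) 1"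
    using higher_pderiv_linear_power[of n "-d" 0] by (simp add: pochhammer_fact)
  then have "poly_integral c d ((pderiv ^^ n) (rodrigues_poly c d n) * [:-d,1:] ^ n) =
      (-1) ^ n * fact n * poly_integral c d (rodrigues_poly c d n)"
    using poly_integral_rodrigues_poly[of c d n] assms by (simp add: poly_integral_smult)
  also have "poly_integral c d (rodrigues_poly c d n) =
      (-1) ^ n * fact n * fact n * ((d - c) ^ n * (d - c) ^ (n + 1)) / fact (2 * n + 1)"
  proof -
    have "(d - c) ^ (n + n + 1) = (d - c) ^ n * (d - c) ^ (n + 1)"
      by (subst add.assoc, rule power_add)
    then show ?thesis
      unfolding rodrigues_poly_def poly_integral_beta[OF less_imp_le[OF assms]] mult_2 by simp
  qed
  finally have "(fact n * (d - c) ^ n) * poly_integral c d (legendre_poly c d n * [:-d,1:] ^ n) =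
      (fact n * (d - c) ^ n) * (fact n * fact n * (d - c) ^ (n + 1) / fact (2 * n + 1))"
    using assms by (simp add: legendre_poly_rodrigues poly_integral_smult)
  moreover have "fact n * (d - c) ^ n \<noteq> 0" using assms by simp
  ultimately show ?thesis by (metis mult_left_cancel)
qed

lemma poly_integral_legendre_poly_square:
  assumes "c < d" "0 < n"
  shows "poly_integral c d (legendre_poly c d n * legendre_poly c d n) = (d - c) / (2 * real n + 1)"
proof -
  define L where "L = legendre_poly c d n"
  define r where "r = L - smult (coeff L n) ([:-d,1:] ^ n)"
  have "degree r < n"
    unfolding r_def L_def by (rule degree_sub_lead_term_less[OF degree_legendre_poly assms(2)])
  have "poly_integral c d (L * L) = poly_integral c d (L * (smult (coeff L n) ([:-d,1:] ^ n) + r))"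
    by (simp add: r_def)
  also have "\<dots> = coeff L n * poly_integral c d (L * [:-d,1:] ^ n) + poly_integral c d (L * r)"
    by (simp add: distrib_left poly_integral_add poly_integral_smult)
  also have "poly_integral c d (L * r) = 0"
    unfolding L_def by (rule legendre_poly_orthogonal[OF assms(1) \<open>degree r < n\<close>])
  also have "coeff L n * poly_integral c d (L * [:-d,1:] ^ n) =
      (fact n * fact n * real ((2 * n) choose n)) * (d - c) / ((2 * real n + 1) * fact (2 * n))"
  proof -
    have "fact (2 * n + 1) = (2 * real n + 1) * fact (2 * n)"
      using fact_Suc[of "2 * n"] by (simp add: algebra_simps)
    then have "real ((2 * n) choose n) / h ^ n * (fact n * fact n * h ^ (n + 1) / fact (2 * n + 1)) =
        (fact n * fact n * real ((2 * n) choose n)) * h / ((2 * real n + 1) * fact (2 * n))"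
      if "h \<noteq> 0" for h :: real
      using that by (simp only:) (simp add: field_simps)
    then show ?thesis
      unfolding L_def lead_coeff_legendre_poly poly_integral_legendre_poly_linear_power[OF assms(1)]
      using assms(1) by simp
  qed
  also have "\<dots> = (d - c) / (2 * real n + 1)"
    unfolding fact_mult_central_binomial by simp
  finally show ?thesis by (simp add: L_def)
qed

lemma legendre_bessel_inequality:
  assumes "c < d" "0 < n" "degree v \<le> n"
  shows "(coeff v n / coeff (legendre_poly c d n) n) ^ 2 * ((d - c) / (2 * real n + 1)) \<le> poly_integral c d (v * v)"
proof -
  define L where "L = legendre_poly c d n"
  define \<alpha> where "\<alpha> = coeff v n / coeff L n"
  define r where "r = v - smult \<alpha> L"
  have "coeff L n \<noteq> 0" using assms(1) by (simp add: L_def lead_coeff_legendre_poly)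
  then have "coeff r n = 0" by (simp add: r_def \<alpha>_def)
  moreover have "degree r \<le> n"
    unfolding r_def L_def using assms(3) degree_legendre_poly
    by (intro degree_diff_le) (auto intro: order.trans[OF degree_smult_le])
  ultimately have "degree r < n" using degree_sub_lead_term_less[of r n 0] assms(2) by simp
  have "poly_integral c d (v * v) =
      \<alpha> ^ 2 * poly_integral c d (L * L) + 2 * \<alpha> * poly_integral c d (L * r) + poly_integral c d (r * r)"
  proof -
    have "v = smult \<alpha> L + r" by (simp add: r_def)
    then have "v * v = smult (\<alpha> ^ 2) (L * L) + (smult \<alpha> (L * r) + smult \<alpha> (L * r)) + r * r"
      by (simp add: algebra_simps power2_eq_square)
    then show ?thesis by (simp only: poly_integral_add poly_integral_smult)
  qed
  also have "poly_integral c d (L * r) = 0"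
    unfolding L_def by (rule legendre_poly_orthogonal[OF assms(1) \<open>degree r < n\<close>])
  also have "poly_integral c d (L * L) = (d - c) / (2 * real n + 1)"
    unfolding L_def by (rule poly_integral_legendre_poly_square[OF assms(1,2)])
  finally show ?thesis
    using poly_integral_square_nonneg[of c d r] assms(1) by (simp add: \<alpha>_def L_def)
qed

lemma lead_coeff_legendre_poly_relation:
  "coeff (legendre_poly c d (Suc (Suc n))) (Suc (Suc n)) * coeff (legendre_poly c d n) n * ((real n + 2) * (2 * real n + 1)) =
    (real n + 1) * (2 * real n + 3) * (coeff (legendre_poly c d (Suc n)) (Suc n)) ^ 2"
proof -
  define B where "B m = real ((2 * m) choose m)" for m
  define h where "h = d - c"
  have rec: "B (Suc m) * (real m + 1) = 2 * (2 * real m + 1) * B m" for m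
    unfolding B_def by (rule central_binomial_Suc)
  have "B (Suc (Suc n)) * B n * ((real n + 2) * (2 * real n + 1)) =
      (B (Suc (Suc n)) * (real (Suc n) + 1)) * (B n * (2 * real n + 1))"
    by (simp add: algebra_simps)
  also have "\<dots> = (2 * real n + 3) * B (Suc n) * (2 * (2 * real n + 1) * B n)"
    unfolding rec by (simp add: algebra_simps)
  also have "\<dots> = (real n + 1) * (2 * real n + 3) * B (Suc n) ^ 2"
    unfolding rec[symmetric] by (simp add: algebra_simps power2_eq_square)
  finally have num: "B (Suc (Suc n)) * B n * ((real n + 2) * (2 * real n + 1)) =
      (real n + 1) * (2 * real n + 3) * B (Suc n) ^ 2" .
  have den: "h ^ Suc (Suc n) * h ^ n = (h ^ Suc n) ^ 2"
    by (simp add: power2_eq_square)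
  have "B (Suc (Suc n)) / h ^ Suc (Suc n) * (B n / h ^ n) * ((real n + 2) * (2 * real n + 1)) =
      B (Suc (Suc n)) * B n * ((real n + 2) * (2 * real n + 1)) / (h ^ Suc (Suc n) * h ^ n)"
    by simp
  also have "\<dots> = (real n + 1) * (2 * real n + 3) * (B (Suc n) / h ^ Suc n) ^ 2"
    unfolding num den by (simp add: power_divide)
  finally show ?thesis
    unfolding lead_coeff_legendre_poly B_def[symmetric] h_def[symmetric] .
qed

section \<open>Quadrature on a spectral volume cell\<close>

definition quad_rule :: "nat \<Rightarrow> (nat \<Rightarrow> real) \<Rightarrow> (nat \<Rightarrow> real) \<Rightarrow> (real \<Rightarrow> real) \<Rightarrow> real" where
  "quad_rule k As xs f = (\<Sum>j\<le>Suc k. As j * f (xs j))"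

definition quad_error :: "nat \<Rightarrow> real \<Rightarrow> real \<Rightarrow> (nat \<Rightarrow> real) \<Rightarrow> (nat \<Rightarrow> real) \<Rightarrow> real poly \<Rightarrow> real" where
  "quad_error k c d As xs p = poly_integral c d p - quad_rule k As xs (poly p)"

definition cell_Mstar :: "(nat \<Rightarrow> real) \<Rightarrow> (nat \<Rightarrow> real) \<Rightarrow> real poly \<Rightarrow> nat \<Rightarrow> real" where
  "cell_Mstar As xs p j = poly p (xs 0) + (\<Sum>l\<le>j. As l * poly (pderiv p) (xs l))"

lemma quad_error_diff_smult:
  "quad_error k c d As xs (p - smult a q) = quad_error k c d As xs p - a * quad_error k c d As xs q"
  unfolding quad_error_def quad_rule_def poly_integral_diff poly_integral_smult poly_diff poly_smult
  by (simp add: algebra_simps sum_subtractf sum_distrib_left)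

locale spectral_volume_cell =
  fixes k :: nat and c d :: real and xs As :: "nat \<Rightarrow> real"
  assumes k_pos: "1 \<le> k"
    and nodes_increasing: "\<And>j. j \<le> k \<Longrightarrow> xs j < xs (Suc j)"
    and first_node: "xs 0 = c" and last_node: "xs (Suc k) = d"
    and quad_exact: "\<And>p. degree p \<le> 2 * k - 1 \<Longrightarrow> quad_error k c d As xs p = 0"
    and legendre_condition: "(d - c) / (2 * real k - 1)
          - quad_rule k As xs (\<lambda>y. shifted_legendre c d (Suc k) y * shifted_legendre c d (k - 1) y) > 0"
begin

lemma nodes_strict_mono: "i < j \<Longrightarrow> j \<le> Suc k \<Longrightarrow> xs i < xs j"
proof (induction j)
  case (Suc j)
  then show ?case using nodes_increasing[of j] by (cases "i = j") auto
qed simp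

lemma nodes_inj: "i \<le> Suc k \<Longrightarrow> j \<le> Suc k \<Longrightarrow> xs i = xs j \<Longrightarrow> i = j"
  using nodes_strict_mono[of i j] nodes_strict_mono[of j i] by (cases i j rule: linorder_cases) auto

lemma cell_nonempty: "c < d"
  using nodes_strict_mono[of 0 "Suc k"] by (simp add: first_node last_node)

lemma quad_rule_pderiv:
  assumes "degree w \<le> k"
  shows "quad_rule k As xs (poly (pderiv w)) = poly w d - poly w c"
proof -
  have "degree (pderiv w) \<le> 2 * k - 1" using assms k_pos by (simp add: degree_pderiv)
  then show ?thesis
    using quad_exact poly_integral_pderiv[of c d w] cell_nonempty by (simp add: quad_error_def)
qed

text \<open>Summation by parts: consecutive values of \<open>M\<^sup>*w\<close> differ by the quadrature
  weights times \<open>w'\<close>, and exactness of the quadrature for \<open>w'\<close> pins down the last value.\<close>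

lemma Mstar_summation_by_parts:
  assumes "degree w \<le> k"
  shows "(\<Sum>j\<le>k. cell_Mstar As xs w j * (f j - f (Suc j))) =
    (\<Sum>j\<le>Suc k. As j * f j * poly (pderiv w) (xs j)) + poly w c * f 0 - poly w d * f (Suc k)"
proof -
  define M where "M = cell_Mstar As xs w"
  have abel: "(\<Sum>j\<le>n. M j * (f j - f (Suc j))) = M 0 * f 0 + (\<Sum>j<n. (M (Suc j) - M j) * f (Suc j)) - M n * f (Suc n)" for n
    by (induction n) (auto simp: algebra_simps)
  have "(\<Sum>j\<le>k. g j) = g 0 + (\<Sum>j<k. g (Suc j))" for g :: "nat \<Rightarrow> real"
    by (metis lessThan_Suc_atMost sum.lessThan_Suc_shift)
  then have split: "(\<Sum>j\<le>Suc k. As j * f j * poly (pderiv w) (xs j)) =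
      As 0 * f 0 * poly (pderiv w) (xs 0) + (\<Sum>j<k. As (Suc j) * f (Suc j) * poly (pderiv w) (xs (Suc j)))
      + As (Suc k) * f (Suc k) * poly (pderiv w) (xs (Suc k))"
    by (simp only: sum.atMost_Suc)
  have step: "M (Suc j) - M j = As (Suc j) * poly (pderiv w) (xs (Suc j))" for j
    by (simp add: M_def cell_Mstar_def)
  have first: "M 0 = poly w c + As 0 * poly (pderiv w) (xs 0)"
    by (simp add: M_def cell_Mstar_def first_node)
  have last: "M k = poly w d - As (Suc k) * poly (pderiv w) (xs (Suc k))"
    using quad_rule_pderiv[OF assms] by (simp add: M_def cell_Mstar_def quad_rule_def first_node)
  show ?thesis
    unfolding M_def[symmetric] abel step first last split by (simp add: algebra_simps)
qed

definition top_error :: real where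
  "top_error = quad_error k c d As xs ([:-d,1:] ^ (2 * k))"

text \<open>Condition (2) of Assumption (S), with \<open>Q(L\<^sub>k\<^sub>+\<^sub>1 L\<^sub>k\<^sub>-\<^sub>1)\<close> replaced by
  \<open>-l\<^sub>k\<^sub>+\<^sub>1 l\<^sub>k\<^sub>-\<^sub>1 top_error\<close> and multiplied by \<open>(2k - 1) / ((2k + 1) l\<^sub>k\<^sup>2)\<close>,
  where \<open>l\<^sub>n\<close> is the leading coefficient of \<open>L\<^sub>n\<close>.\<close>

definition stability_const :: real where
  "stability_const = (d - c) / (2 * real k + 1) / (coeff (legendre_poly c d k) k) ^ 2 + real k / (real k + 1) * top_error"

lemma quad_error_top_coeff:
  assumes "degree p \<le> 2 * k"
  shows "quad_error k c d As xs p = coeff p (2 * k) * top_error"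
proof -
  have "degree (p - smult (coeff p (2 * k)) ([:-d,1:] ^ (2 * k))) < 2 * k"
    using assms k_pos by (intro degree_sub_lead_term_less) simp_all
  then have "quad_error k c d As xs (p - smult (coeff p (2 * k)) ([:-d,1:] ^ (2 * k))) = 0"
    by (intro quad_exact) simp
  then show ?thesis unfolding quad_error_diff_smult top_error_def by simp
qed

lemma Mstar_energy_identity:
  assumes "poly V c = 0" and "degree w \<le> k"
  shows "(\<Sum>j\<le>k. cell_Mstar As xs w j * (poly V (xs (Suc j)) - poly V (xs j))) =
    poly_integral c d (pderiv V * w) + quad_error k c d As xs (pderiv w * V)"
proof -
  define f where "f j = poly V (xs j)" for j
  have "(\<Sum>j\<le>k. cell_Mstar As xs w j * (poly V (xs (Suc j)) - poly V (xs j))) =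
      - (\<Sum>j\<le>k. cell_Mstar As xs w j * (f j - f (Suc j)))"
    by (simp add: f_def sum_negf[symmetric] algebra_simps)
  also have "\<dots> = poly (V * w) d - quad_rule k As xs (poly (pderiv w * V))"
    unfolding Mstar_summation_by_parts[OF assms(2)]
    by (simp add: f_def assms(1) quad_rule_def first_node last_node algebra_simps)
  also have "poly (V * w) d = poly_integral c d (pderiv V * w) + poly_integral c d (pderiv w * V)"
    using poly_integral_pderiv[of c d "V * w"] cell_nonempty assms(1)
    by (simp add: pderiv_mult poly_integral_add algebra_simps)
  finally show ?thesis unfolding quad_error_def by linarith
qed

lemma legendre_condition_top_error:
  "0 < (d - c) / (2 * real k - 1)
     + coeff (legendre_poly c d (Suc k)) (Suc k) * coeff (legendre_poly c d (k - 1)) (k - 1) * top_error"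
proof -
  define P where "P = legendre_poly c d (Suc k) * legendre_poly c d (k - 1)"
  have "poly_integral c d P = 0"
    unfolding P_def using cell_nonempty degree_legendre_poly[of c d "k - 1"]
    by (intro legendre_poly_orthogonal) simp_all
  moreover have sum_deg: "Suc k + (k - 1) = 2 * k" using k_pos by simp
  then have "degree P \<le> 2 * k"
    unfolding P_def using degree_mult_le degree_legendre_poly add_mono order_trans by metis
  moreover have "coeff P (2 * k) = coeff (legendre_poly c d (Suc k)) (Suc k) * coeff (legendre_poly c d (k - 1)) (k - 1)"
    using coeff_mult_degree_bounds[OF degree_legendre_poly degree_legendre_poly, of c d "Suc k" c d "k - 1"]
    unfolding sum_deg P_def .
  ultimately have "quad_rule k As xs (poly P) =
      - (coeff (legendre_poly c d (Suc k)) (Suc k) * coeff (legendre_poly c d (k - 1)) (k - 1) * top_error)"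
    using quad_error_top_coeff[of P] by (simp add: quad_error_def)
  moreover have "(\<lambda>y. shifted_legendre c d (Suc k) y * shifted_legendre c d (k - 1) y) = poly P"
    by (simp add: P_def fun_eq_iff poly_legendre_poly)
  ultimately show ?thesis using legendre_condition by simp
qed

lemma stability_const_pos: "0 < stability_const"
proof -
  obtain n where k: "k = Suc n" using k_pos by (cases k) auto
  define lc where "lc m = coeff (legendre_poly c d m) m" for m
  have rel: "lc (Suc k) * lc (k - 1) * ((real k + 1) * (2 * real k - 1)) = real k * ((2 * real k + 1) * lc k ^ 2)"
    using lead_coeff_legendre_poly_relation[of c d n] unfolding lc_def k by (simp add: algebra_simps)
  have "lc k \<noteq> 0" "2 * real k - 1 > 0" "2 * real k + 1 > 0"
    using cell_nonempty k_pos by (auto simp: lc_def lead_coeff_legendre_poly)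
  have rescale: "h / Q + K / (K + 1) * r = (2 * K - 1) / Q * (h / (2 * K - 1) + p * r)"
    if "p * ((K + 1) * (2 * K - 1)) = K * Q" "Q \<noteq> 0" "2 * K - 1 > 0" for h K p Q r :: real
  proof -
    have "K + 1 \<noteq> 0" using that(3) by auto
    have "K / (K + 1) = (2 * K - 1) * p / Q"
    proof (subst frac_eq_eq)
      show "K * Q = (2 * K - 1) * p * (K + 1)"
        using that(1) by (simp add: algebra_simps)
    qed (use \<open>K + 1 \<noteq> 0\<close> that(2) in auto)
    then have "h / Q + K / (K + 1) * r = h / Q + (2 * K - 1) * p / Q * r" by simp
    also have "\<dots> = (2 * K - 1) / Q * (h / (2 * K - 1) + p * r)"
      using that(2,3) by (simp add: field_simps)
    finally show ?thesis .
  qed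
  have "stability_const = (2 * real k - 1) / ((2 * real k + 1) * lc k ^ 2)
      * ((d - c) / (2 * real k - 1) + lc (Suc k) * lc (k - 1) * top_error)"
    unfolding stability_const_def lc_def[symmetric] divide_divide_eq_left
    using rel \<open>lc k \<noteq> 0\<close> \<open>2 * real k - 1 > 0\<close> \<open>2 * real k + 1 > 0\<close> by (intro rescale) simp_all
  with legendre_condition_top_error \<open>lc k \<noteq> 0\<close> \<open>2 * real k - 1 > 0\<close> show ?thesis
    by (simp add: lc_def)
qed

lemma quad_error_energy:
  assumes "degree V \<le> Suc k"
  shows "quad_error k c d As xs (pderiv (pderiv V) * V) = real k * (real k + 1) * (coeff V (Suc k)) ^ 2 * top_error"
proof -
  have "degree (pderiv (pderiv V)) \<le> k - 1" using assms by (simp add: degree_pderiv)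
  moreover have sum_deg: "k - 1 + Suc k = 2 * k" using k_pos by simp
  ultimately have "degree (pderiv (pderiv V) * V) \<le> 2 * k"
    using assms degree_mult_le add_mono order_trans by metis
  moreover have "coeff (pderiv (pderiv V) * V) (2 * k) = real k * (real k + 1) * (coeff V (Suc k)) ^ 2"
    using coeff_mult_degree_bounds[OF \<open>degree (pderiv (pderiv V)) \<le> k - 1\<close> assms] k_pos
    unfolding sum_deg by (simp add: coeff_pderiv power2_eq_square algebra_simps)
  ultimately show ?thesis by (simp add: quad_error_top_coeff)
qed

lemma energy_lower_bound:
  assumes "degree V \<le> Suc k"
  shows "(real k + 1) ^ 2 * (coeff V (Suc k)) ^ 2 * stability_const
    \<le> poly_integral c d (pderiv V * pderiv V) + quad_error k c d As xs (pderiv (pderiv V) * V)"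
proof -
  define \<beta> where "\<beta> = coeff V (Suc k)"
  define lc where "lc = coeff (legendre_poly c d k) k"
  have "degree (pderiv V) \<le> k" using assms by (simp add: degree_pderiv)
  moreover have "coeff (pderiv V) k = (real k + 1) * \<beta>" by (simp add: coeff_pderiv \<beta>_def)
  ultimately have "((real k + 1) * \<beta> / lc) ^ 2 * ((d - c) / (2 * real k + 1)) \<le> poly_integral c d (pderiv V * pderiv V)"
    using legendre_bessel_inequality[OF cell_nonempty, of k "pderiv V"] k_pos by (simp add: lc_def)
  moreover have "(real k + 1) ^ 2 * \<beta> ^ 2 * stability_const =
      ((real k + 1) * \<beta> / lc) ^ 2 * ((d - c) / (2 * real k + 1)) + real k * (real k + 1) * \<beta> ^ 2 * top_error"
    unfolding stability_const_def lc_def[symmetric] by (simp add: field_simps power2_eq_square)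
  ultimately show ?thesis using quad_error_energy[OF assms] by (simp add: \<beta>_def)
qed

lemma energy_nonpos_imp_pderiv_eq_0:
  assumes "degree V \<le> Suc k"
    and "poly_integral c d (pderiv V * pderiv V) + quad_error k c d As xs (pderiv (pderiv V) * V) \<le> 0"
  shows "pderiv V = 0"
proof -
  have "(real k + 1) ^ 2 * (coeff V (Suc k)) ^ 2 * stability_const \<le> 0"
    using energy_lower_bound[OF assms(1)] assms(2) by linarith
  with stability_const_pos have "coeff V (Suc k) = 0"
    by (simp add: mult_le_0_iff zero_less_mult_iff)
  then have "poly_integral c d (pderiv V * pderiv V) \<le> 0"
    using assms quad_error_energy by simp
  then have "poly_integral c d (pderiv V * pderiv V) = 0"
    using poly_integral_square_nonneg[of c d "pderiv V"] cell_nonempty by simp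
  then show ?thesis using poly_integral_square_eq_0 cell_nonempty by blast
qed

lemma Mstar_dual_injective:
  assumes annihilates: "\<And>w. degree w \<le> k \<Longrightarrow> (\<Sum>j\<le>k. cell_Mstar As xs w j * e j) = 0"
    and "j \<le> k"
  shows "e j = 0"
proof -
  obtain V where "degree V \<le> Suc k" and V: "\<And>m. m \<le> Suc k \<Longrightarrow> poly V (xs m) = (\<Sum>l<m. e l)"
    using lagrange_interpolation_exists[of "Suc k" xs "\<lambda>m. \<Sum>l<m. e l"] nodes_inj by blast
  have increments: "poly V (xs (Suc i)) - poly V (xs i) = e i" if "i \<le> k" for i
    using V[of "Suc i"] V[of i] that by simp
  have "poly V c = 0" using V[of 0] first_node by simp
  moreover have "degree (pderiv V) \<le> k" using \<open>degree V \<le> Suc k\<close> by (simp add: degree_pderiv)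
  ultimately have "poly_integral c d (pderiv V * pderiv V) + quad_error k c d As xs (pderiv (pderiv V) * V) = 0"
    using Mstar_energy_identity[of V "pderiv V"] annihilates[of "pderiv V"] increments by simp
  then have "pderiv V = 0" using energy_nonpos_imp_pderiv_eq_0[OF \<open>degree V \<le> Suc k\<close>] by simp
  then obtain a where "V = [:a:]" by (metis pderiv_iszero)
  then show ?thesis using increments[OF \<open>j \<le> k\<close>] by simp
qed

end

section \<open>The spectral volume scheme on the whole mesh\<close>

lemma Mstar_eq_cell_Mstar: "Mstar A x w i j = cell_Mstar (A i) (x i) (w i) j"
  by (simp add: Mstar_def cell_Mstar_def)

lemma mesh_spectral_volume_cell:
  assumes "mesh a b N k xI x" "assumption_S N k xI x A" "i < N"
  shows "spectral_volume_cell k (xI i) (xI (Suc i)) (x i) (A i)"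
proof
  show "1 \<le> k" using assms(2) by (simp add: assumption_S_def)
  show "x i j < x i (Suc j)" if "j \<le> k" for j using assms(1,3) that by (simp add: mesh_def)
  show "x i 0 = xI i" "x i (Suc k) = xI (Suc i)" using assms(1,3) by (simp_all add: mesh_def)
  have quad_eq: "quad k A x i = quad_rule k (A i) (x i)" by (simp add: fun_eq_iff quad_def quad_rule_def)
  then show "quad_error k (xI i) (xI (Suc i)) (A i) (x i) p = 0" if "degree p \<le> 2 * k - 1" for p
    using assms(2,3) that by (simp add: assumption_S_def quad_error_def poly_integral_def)
  show "(xI (Suc i) - xI i) / (2 * real k - 1) - quad_rule k (A i) (x i)
      (\<lambda>y. shifted_legendre (xI i) (xI (Suc i)) (Suc k) y * shifted_legendre (xI i) (xI (Suc i)) (k - 1) y) > 0"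
    using assms(2,3) by (simp add: assumption_S_def flip: quad_eq)
qed

lemma sum_weighted_eq_iff:
  fixes a b :: "nat \<Rightarrow> nat \<Rightarrow> real"
  shows "(\<forall>ws. (\<Sum>i<N. \<Sum>j\<le>k. ws i j * a i j) = (\<Sum>i<N. \<Sum>j\<le>k. ws i j * b i j))
    \<longleftrightarrow> (\<forall>i<N. \<forall>j\<le>k. a i j = b i j)"
proof
  assume "\<forall>ws. (\<Sum>i<N. \<Sum>j\<le>k. ws i j * a i j) = (\<Sum>i<N. \<Sum>j\<le>k. ws i j * b i j)"
  then have "(\<Sum>i<N. \<Sum>j\<le>k. (a i j - b i j) * a i j) = (\<Sum>i<N. \<Sum>j\<le>k. (a i j - b i j) * b i j)" ..
  moreover have "(\<Sum>i<N. \<Sum>j\<le>k. (a i j - b i j) ^ 2) =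
      (\<Sum>i<N. \<Sum>j\<le>k. (a i j - b i j) * a i j) - (\<Sum>i<N. \<Sum>j\<le>k. (a i j - b i j) * b i j)"
    by (simp only: power2_eq_square right_diff_distrib sum_subtractf)
  ultimately have "(\<Sum>i<N. \<Sum>j\<le>k. (a i j - b i j) ^ 2) = 0" by simp
  then show "\<forall>i<N. \<forall>j\<le>k. a i j = b i j"
    by (simp add: sum_nonneg_eq_0_iff sum_nonneg)
qed simp

lemma Mstar_weighted_eq_iff:
  fixes a b :: "nat \<Rightarrow> nat \<Rightarrow> real"
  assumes cells: "\<And>i. i < N \<Longrightarrow> spectral_volume_cell k (xI i) (xI (Suc i)) (x i) (A i)"
  shows "(\<forall>w. in_Vk N k w \<longrightarrow>
      (\<Sum>i<N. \<Sum>j\<le>k. Mstar A x w i j * a i j) = (\<Sum>i<N. \<Sum>j\<le>k. Mstar A x w i j * b i j))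
    \<longleftrightarrow> (\<forall>i<N. \<forall>j\<le>k. a i j = b i j)"
proof
  assume weighted: "\<forall>w. in_Vk N k w \<longrightarrow>
      (\<Sum>i<N. \<Sum>j\<le>k. Mstar A x w i j * a i j) = (\<Sum>i<N. \<Sum>j\<le>k. Mstar A x w i j * b i j)"
  show "\<forall>i<N. \<forall>j\<le>k. a i j = b i j"
  proof (intro allI impI)
    fix i0 j assume "i0 < N" "j \<le> k"
    have "(\<Sum>j\<le>k. cell_Mstar (A i0) (x i0) p j * (a i0 j - b i0 j)) = 0" if "degree p \<le> k" for p
    proof -
      define w where "w i = (if i = i0 then p else 0)" for i
      have "in_Vk N k w" using that by (simp add: in_Vk_def w_def)
      with weighted have "(\<Sum>i<N. \<Sum>j\<le>k. Mstar A x w i j * (a i j - b i j)) = 0"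
        by (simp add: right_diff_distrib sum_subtractf)
      also have "(\<Sum>i<N. \<Sum>j\<le>k. Mstar A x w i j * (a i j - b i j)) =
          (\<Sum>i<N. if i = i0 then (\<Sum>j\<le>k. cell_Mstar (A i0) (x i0) p j * (a i0 j - b i0 j)) else 0)"
        by (intro sum.cong refl) (simp add: w_def Mstar_eq_cell_Mstar cell_Mstar_def)
      finally show ?thesis using \<open>i0 < N\<close> by simp
    qed
    then have "a i0 j - b i0 j = 0"
      using \<open>j \<le> k\<close>
      by (rule spectral_volume_cell.Mstar_dual_injective[OF cells[OF \<open>i0 < N\<close>], where e = "\<lambda>j. a i0 j - b i0 j"])
    then show "a i0 j = b i0 j" by simp
  qed
qed simp

theorem theorem3p11:
  fixes a b :: real and N k :: nat
    and xI :: "nat \<Rightarrow> real" and x A :: "nat \<Rightarrow> nat \<Rightarrow> real"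
    and ut :: "nat \<Rightarrow> real poly"
    and fhat :: "nat \<Rightarrow> nat \<Rightarrow> real" and fI :: "nat \<Rightarrow> real"
  assumes "mesh a b N k xI x"
    and "assumption_S N k xI x A"
    and "in_Vk N k ut"
    and "\<forall>i<N. fhat i 0 = fI i \<and> fhat i (Suc k) = fI (Suc i)"
  shows "(\<forall>ws :: nat \<Rightarrow> nat \<Rightarrow> real.
            ip_star_fun N k x ut ws = (\<Sum>i<N. \<Sum>j\<le>k. ws i j * (fhat i j - fhat i (Suc j))))
         \<longleftrightarrow>
         (\<forall>w :: nat \<Rightarrow> real poly. in_Vk N k w \<longrightarrow>
            ip_star N k A x ut w =
              (\<Sum>i<N. (\<Sum>j\<le>Suc k. A i j * fhat i j * poly (pderiv (w i)) (x i j))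
                 + poly (w i) (xI i) * fI i - poly (w i) (xI (Suc i)) * fI (Suc i)))"
proof -
  have cells: "\<And>i. i < N \<Longrightarrow> spectral_volume_cell k (xI i) (xI (Suc i)) (x i) (A i)"
    using assms(1,2) by (rule mesh_spectral_volume_cell)
  define avg where "avg i j = integral {x i j .. x i (Suc j)} (poly (ut i))" for i j
  define flux where "flux i j = fhat i j - fhat i (Suc j)" for i j
  have flux_form: "(\<Sum>i<N. \<Sum>j\<le>k. Mstar A x w i j * flux i j) =
      (\<Sum>i<N. (\<Sum>j\<le>Suc k. A i j * fhat i j * poly (pderiv (w i)) (x i j))
                 + poly (w i) (xI i) * fI i - poly (w i) (xI (Suc i)) * fI (Suc i))" if "in_Vk N k w" for w
    using that assms(4) spectral_volume_cell.Mstar_summation_by_parts[OF cells]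
    by (intro sum.cong refl) (auto simp: in_Vk_def flux_def Mstar_eq_cell_Mstar)
  have "(\<forall>ws. ip_star_fun N k x ut ws = (\<Sum>i<N. \<Sum>j\<le>k. ws i j * flux i j))
      \<longleftrightarrow> (\<forall>i<N. \<forall>j\<le>k. avg i j = flux i j)"
    unfolding ip_star_fun_def avg_def[symmetric] by (rule sum_weighted_eq_iff)
  also have "\<dots> \<longleftrightarrow> (\<forall>w. in_Vk N k w \<longrightarrow>
      (\<Sum>i<N. \<Sum>j\<le>k. Mstar A x w i j * avg i j) = (\<Sum>i<N. \<Sum>j\<le>k. Mstar A x w i j * flux i j))"
    using cells by (rule Mstar_weighted_eq_iff[symmetric])
  finally show ?thesis
    unfolding flux_def[symmetric] by (simp add: ip_star_def ip_star_fun_def avg_def flux_form)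
qed

end
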